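(* Suppose $\Delta$ is full dimensional and convex. Given $\epsilon>0$ and $x\in\mathcal X$, for any $M\ge1$, if $\delta^{(1)},\dots,\delta^{(M)}$ are i.i.d. samples from $\phi_{\kappa(\epsilon),x}$, then $$\mathbb E_{\phi^M_{\kappa(\epsilon),x}}\Big[\max_{1\le i\le M}g(x,\delta^{(i)})\Big]\ge G(x)-\epsilon.$$
   Context: $\mathcal X\subset\mathbb R^n$ compact convex; $\Delta\subset\mathbb R^d$ compact; $g:\mathcal X\times\Delta\to\mathbb R$ with $\delta\mapsto g(x,\delta)$ $L_{g,\Delta}$-Lipschitz (Euclidean norm) for each $x$; $G(x):=\max_{\delta\in\Delta}g(x,\delta)$. For $\kappa\in(0,1]$, $\phi_{\kappa,x}(\delta):=\exp(g(x,\delta)/\kappa)/\int_\Delta\exp(g(x,\delta')/\kappa)d\delta'$ is a probability density on $\Delta$. $R_\Delta$ is the radius of the largest Euclidean ball $B_{R_\Delta}(\delta_0)\subseteq\Delta$; $r:=\mathrm{vol}(B_{R_\Delta}(\delta_0))/\mathrm{vol}(\Delta)$; $D_\Delta:=\max_{\delta,\delta'\in\Delta}\|\delta-\delta'\|$; $C:=L_{g,\Delta}(R_\Delta+D_\Delta)-\log r$; $\kappa(\epsilon):=\min\{\frac{\epsilon}{2C},(\frac{\epsilon}{2d})^2,1\}$. $\phi^M$ denotes the $M$-fold product measure. *)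

theory Defs
  imports "HOL-Analysis.Analysis"
begin

definition inradius :: "'b::euclidean_space set \<Rightarrow> real" where
  "inradius D = (SUP r \<in> {r. r \<ge> 0 \<and> (\<exists>c. cball c r \<subseteq> D)}. r)"

text \<open>r = vol(B_{R}(delta0)) / vol(Delta); the volume of a ball does not depend on its centre.\<close>
definition vol_ratio :: "'b::euclidean_space set \<Rightarrow> real" where
  "vol_ratio D = measure lborel (cball (0::'b) (inradius D)) / measure lborel D"

definition constC :: "real \<Rightarrow> 'b::euclidean_space set \<Rightarrow> real" where
  "constC L D = L * (inradius D + diameter D) - ln (vol_ratio D)"

text \<open>kappa(eps) := min {eps/(2C), (eps/(2d))^2, 1}; if C = 0 the first term is +infinity.\<close>
definition kappa :: "real \<Rightarrow> 'b::euclidean_space set \<Rightarrow> real \<Rightarrow> real" where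
  "kappa L D eps =
     (let d = real DIM('b);
          m = min ((eps / (2 * d))\<^sup>2) 1
      in if constC L D > 0 then min (eps / (2 * constC L D)) m else m)"

definition phi :: "('a \<Rightarrow> 'b::euclidean_space \<Rightarrow> real) \<Rightarrow> 'b set \<Rightarrow> real \<Rightarrow> 'a \<Rightarrow> 'b \<Rightarrow> real" where
  "phi g D k x \<delta> = exp (g x \<delta> / k) / (LINT \<delta>':D|lborel. exp (g x \<delta>' / k))"

definition phi_measure :: "('a \<Rightarrow> 'b::euclidean_space \<Rightarrow> real) \<Rightarrow> 'b set \<Rightarrow> real \<Rightarrow> 'a \<Rightarrow> 'b measure" where
  "phi_measure g D k x = density (restrict_space lborel D) (\<lambda>\<delta>. ennreal (phi g D k x \<delta>))"

definition Gmax :: "('a \<Rightarrow> 'b \<Rightarrow> real) \<Rightarrow> 'b set \<Rightarrow> 'a \<Rightarrow> real" where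
  "Gmax g D x = (SUP \<delta> \<in> D. g x \<delta>)"

end

theory Submission
  imports Defs "HOL-Probability.Probability"
begin

text \<open>Writing \<open>Z\<close> for the partition function of the Gibbs density \<open>\<phi> = exp (g/\<kappa>) / Z\<close>, one has
  \<open>E\<^sub>\<phi>[g] = \<kappa> (ln Z - ln vol \<Delta>) + \<kappa> KL(\<phi> \<parallel> uniform) \<ge> \<kappa> ln (Z / vol \<Delta>)\<close>.
  Contracting an inscribed ball of radius \<open>R\<close> towards a maximiser \<open>s\<close> of \<open>g\<close> by the factor \<open>\<kappa>\<close>
  yields a ball of radius \<open>\<kappa> R\<close> inside \<open>\<Delta>\<close> on which \<open>g \<ge> G - \<kappa> L diam \<Delta>\<close>, so
  \<open>Z \<ge> vol(B\<^sub>\<kappa>\<^sub>R) exp (G/\<kappa> - L diam \<Delta>)\<close>. Together this gives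
  \<open>E\<^sub>\<phi>[g] \<ge> G - \<kappa> C + d \<kappa> ln \<kappa>\<close>, and the choice of \<open>\<kappa>(\<epsilon>)\<close> makes both error terms at
  most \<open>\<epsilon>/2\<close>. Finally, the maximum of \<open>M\<close> samples dominates the first sample.\<close>

definition gibbs_partition :: "('b::euclidean_space \<Rightarrow> real) \<Rightarrow> 'b set \<Rightarrow> real \<Rightarrow> real" where
  "gibbs_partition f D k = (LINT y:D|lborel. exp (f y / k))"

lemma phi_eq_gibbs_partition: "phi g D k x \<delta> = exp (g x \<delta> / k) / gibbs_partition (g x) D k"
  by (simp add: phi_def gibbs_partition_def)

lemma set_integrable_compact:
  fixes f :: "'b::euclidean_space \<Rightarrow> real"
  assumes "compact D" "continuous_on D f"
  shows "set_integrable lborel D f"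
  unfolding set_integrable_def using assms by (rule borel_integrable_compact)

lemma gibbs_partition_pos:
  fixes f :: "'b::euclidean_space \<Rightarrow> real"
  assumes D: "compact D" "0 < measure lborel D" and f: "continuous_on D f" and k: "0 < k"
  shows "0 < gibbs_partition f D k"
proof -
  have "D \<noteq> {}" using D(2) by auto
  then obtain m where m: "m \<in> D" "\<And>y. y \<in> D \<Longrightarrow> f m \<le> f y"
    using continuous_attains_inf[OF D(1) _ f] by blast
  have "measure lborel D * exp (f m / k) = (LINT y:D|lborel. exp (f m / k))"
    using D(1) emeasure_compact_finite[OF D(1)] by (simp add: set_integral_const compact_imp_closed)
  also have "\<dots> \<le> gibbs_partition f D k"
    unfolding gibbs_partition_def using D(1) f k m(2)
    by (intro set_integral_mono set_integrable_compact continuous_intros) (auto simp: divide_right_mono)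
  moreover have "0 < measure lborel D * exp (f m / k)" using D(2) by simp
  ultimately show ?thesis by linarith
qed

lemma mult_ln_ge_sub_inverse:
  fixes p V :: real
  assumes "0 < p" "0 < V"
  shows "p - 1 / V \<le> p * ln (p * V)"
proof -
  have "ln (1 / (p * V)) \<le> 1 / (p * V) - 1"
    using assms by (intro ln_le_minus_one) auto
  then have "p * (- ln (p * V)) \<le> p * (1 / (p * V) - 1)"
    using assms by (intro mult_left_mono) (auto simp: ln_div)
  also have "\<dots> = 1 / V - p"
    using assms by (simp add: field_simps)
  finally show ?thesis by simp
qed

text \<open>Gibbs' inequality, i.e. nonnegativity of the relative entropy of the Gibbs density
  with respect to the uniform density on \<open>D\<close>, integrated pointwise from \<open>ln x \<le> x - 1\<close>.\<close>
lemma gibbs_mean_ge_ln_partition: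
  fixes f :: "'b::euclidean_space \<Rightarrow> real"
  assumes D: "compact D" "0 < measure lborel D" and f: "continuous_on D f" and k: "0 < k"
  defines "Z \<equiv> gibbs_partition f D k"
  shows "k * (ln Z - ln (measure lborel D)) \<le> (LINT y:D|lborel. exp (f y / k) / Z * f y)"
proof -
  define V where "V = measure lborel D"
  have Z: "0 < Z" unfolding Z_def using D f k by (rule gibbs_partition_pos)
  have V: "0 < V" using D(2) by (simp add: V_def)
  define c where "c = k * (ln Z - ln V + 1) / Z"
  have int_exp: "set_integrable lborel D (\<lambda>y. exp (f y / k))"
    using D(1) f k by (intro set_integrable_compact continuous_intros) auto
  have int_one: "set_integrable lborel D (\<lambda>y. k / V)"
    using D(1) by (intro set_integrable_compact continuous_intros)
  have "k * (ln Z - ln V) = c * Z - k / V * V"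
    using Z V by (simp add: c_def field_simps)
  also have "\<dots> = (LINT y:D|lborel. c * exp (f y / k) - k / V)"
    using D(1) emeasure_compact_finite[OF D(1)] int_exp int_one
    by (simp add: set_integral_diff set_integral_mult_right set_integral_const
        compact_imp_closed Z_def gibbs_partition_def V_def)
  also have "\<dots> \<le> (LINT y:D|lborel. exp (f y / k) / Z * f y)"
  proof (rule set_integral_mono)
    show "set_integrable lborel D (\<lambda>y. c * exp (f y / k) - k / V)"
      using D(1) f k by (intro set_integrable_compact continuous_intros) auto
    show "set_integrable lborel D (\<lambda>y. exp (f y / k) / Z * f y)"
      using D(1) f k Z by (intro set_integrable_compact continuous_intros) auto
  next
    fix y
    define p where "p = exp (f y / k) / Z"
    have p: "0 < p" using Z by (simp add: p_def)
    have "ln (p * V) = f y / k - ln Z + ln V"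
      using Z V by (simp add: p_def ln_mult ln_div)
    then have "k * (p - 1 / V) \<le> k * (p * (f y / k - ln Z + ln V))"
      using mult_ln_ge_sub_inverse[OF p V] k by (intro mult_left_mono) auto
    also have "\<dots> = p * f y - k * p * (ln Z - ln V)"
      using k by (simp add: field_simps)
    finally have "k * p * (ln Z - ln V + 1) - k / V \<le> p * f y"
      by (simp add: algebra_simps)
    then show "c * exp (f y / k) - k / V \<le> exp (f y / k) / Z * f y"
      by (simp add: c_def p_def mult.commute mult.left_commute)
  qed
  finally show ?thesis by (simp add: V_def)
qed

lemma mem_contracted_cball:
  fixes D :: "'b::euclidean_space set"
  assumes D: "bounded D" "convex D" and ball: "cball c r \<subseteq> D" and s: "s \<in> D"
    and k: "0 < k" "k \<le> 1" and y: "y \<in> cball (s + k *\<^sub>R (c - s)) (k * r)"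
  shows "y \<in> D" and "dist y s \<le> k * diameter D"
proof -
  define b where "b = c + (1 / k) *\<^sub>R (y - (s + k *\<^sub>R (c - s)))"
  have "dist c b = dist y (s + k *\<^sub>R (c - s)) / k"
    using k by (simp add: b_def dist_norm)
  also have "\<dots> \<le> r"
    using y k by (simp add: dist_commute divide_le_eq mult.commute)
  finally have b: "b \<in> D" using ball by auto
  have y_eq: "y = (1 - k) *\<^sub>R s + k *\<^sub>R b"
    using k by (simp add: b_def algebra_simps)
  show "y \<in> D" using convexD[OF D(2) s b, of "1 - k" k] k y_eq by simp
  have "dist y s = k * dist b s"
    using k by (simp add: y_eq dist_norm algebra_simps flip: scaleR_diff_right)
  also have "\<dots> \<le> k * diameter D"
    using diameter_bounded_bound[OF D(1) b s] k by simp
  finally show "dist y s \<le> k * diameter D" .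
qed

text \<open>On the contracted ball, which lies within distance \<open>k \<cdot> diameter D\<close> of \<open>s\<close>,
  the integrand is at least \<open>exp (f s / k - L \<cdot> diameter D)\<close>.\<close>
lemma gibbs_partition_ge_cball:
  fixes f :: "'b::euclidean_space \<Rightarrow> real"
  assumes D: "compact D" "convex D" and ball: "cball c r \<subseteq> D"
    and k: "0 < k" "k \<le> 1" and s: "s \<in> D" and f: "L-lipschitz_on D f"
  shows "measure lborel (cball c (k * r)) * exp (f s / k - L * diameter D) \<le> gibbs_partition f D k"
proof -
  define a where "a = s + k *\<^sub>R (c - s)"
  define A where "A = cball a (k * r)"
  define E where "E = exp (f s / k - L * diameter D)"
  have near_s: "y \<in> D \<and> f s / k - L * diameter D \<le> f y / k" if "y \<in> A" for y
  proof -
    note contracted = mem_contracted_cball[OF compact_imp_bounded[OF D(1)] D(2) ball s k]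
    have yD: "y \<in> D" using contracted(1) that by (simp add: A_def a_def)
    have "L * dist y s \<le> L * (k * diameter D)"
      using contracted(2) that lipschitz_on_nonneg[OF f] by (intro mult_left_mono) (simp_all add: A_def a_def)
    then have "f s - L * (k * diameter D) \<le> f y"
      using lipschitz_onD[OF f yD s] by (simp add: dist_real_def abs_le_iff)
    then have "(f s - L * (k * diameter D)) / k \<le> f y / k"
      using k by (intro divide_right_mono) auto
    then show ?thesis using yD k by (simp add: field_simps)
  qed
  have "measure lborel (cball c (k * r)) * E = (LINT y:D|lborel. indicator A y * E)"
  proof -
    have "(LINT y:D|lborel. indicator A y * E) = (LINT y:A|lborel. E)"
      unfolding set_lebesgue_integral_def using near_s
      by (intro Bochner_Integration.integral_cong) (auto simp: indicator_def)
    also have "\<dots> = measure lborel A * E"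
      using emeasure_lborel_cball_finite[of a "k * r"] by (subst set_integral_const) (auto simp: A_def)
    also have "measure lborel A = measure lborel (cball c (k * r))"
      by (cases "0 \<le> k * r") (simp_all add: A_def content_cball)
    finally show ?thesis ..
  qed
  also have "\<dots> \<le> gibbs_partition f D k"
    unfolding gibbs_partition_def
  proof (rule set_integral_mono)
    show "set_integrable lborel D (\<lambda>y. indicator A y * E)"
      using D(1) emeasure_lborel_cball_finite[of a "k * r"] unfolding set_integrable_def A_def
      by (intro integrable_mult_indicator integrable_mult_left)
        (auto simp: compact_imp_closed integrable_indicator_iff)
    show "set_integrable lborel D (\<lambda>y. exp (f y / k))"
      using D(1) lipschitz_on_continuous_on[OF f] k
      by (intro set_integrable_compact continuous_intros) auto
  qed (use near_s in \<open>auto simp: E_def indicator_def\<close>)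
  finally show ?thesis by (simp add: E_def)
qed

lemma ex_cball_subset_of_interior:
  assumes "interior D \<noteq> {}"
  obtains c r where "0 < r" "cball c r \<subseteq> D"
proof -
  obtain p where "p \<in> interior D" using assms by blast
  then show ?thesis using that by (auto simp: mem_interior_cball)
qed

lemma measure_pos_of_interior:
  fixes D :: "'b::euclidean_space set"
  assumes "compact D" "interior D \<noteq> {}"
  shows "0 < measure lborel D"
proof -
  obtain c r where r: "0 < r" "cball c r \<subseteq> D"
    using assms(2) by (rule ex_cball_subset_of_interior)
  then have "measure lborel (cball c r) \<le> measure lborel D"
    using assms emeasure_compact_finite[OF assms(1)]
    by (intro measure_mono_fmeasurable) (auto simp: fmeasurable_def compact_imp_closed)
  then show ?thesis using content_cball_pos[OF r(1), of c] by linarith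
qed

lemma bdd_above_inscribed_radii:
  fixes D :: "'b::euclidean_space set"
  assumes "bounded D"
  shows "bdd_above {r. r \<ge> 0 \<and> (\<exists>c. cball c r \<subseteq> D)}"
proof -
  obtain B x0 where B: "D \<subseteq> cball x0 B"
    using assms unfolding bounded_subset_cball by blast
  show ?thesis
  proof (rule bdd_aboveI)
    fix r assume "r \<in> {r. r \<ge> 0 \<and> (\<exists>c. cball c r \<subseteq> D)}"
    then obtain c where "r \<ge> 0" "cball c r \<subseteq> D" by blast
    with B have "r \<ge> 0" "cball c r \<subseteq> cball x0 B" by simp_all
    then have "dist c x0 + r \<le> B" unfolding cball_subset_cball_iff by simp
    then show "r \<le> B" using zero_le_dist[of c x0] by linarith
  qed
qed

lemma inradius_pos:
  fixes D :: "'b::euclidean_space set"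
  assumes "bounded D" "interior D \<noteq> {}"
  shows "0 < inradius D"
proof -
  obtain c r where "0 < r" "cball c r \<subseteq> D"
    using assms(2) by (rule ex_cball_subset_of_interior)
  then have "r \<le> inradius D"
    unfolding inradius_def using bdd_above_inscribed_radii[OF assms(1)]
    by (intro cSup_upper) auto
  with \<open>0 < r\<close> show ?thesis by linarith
qed

lemma ex_cball_subset_radius_gt:
  fixes D :: "'b::euclidean_space set"
  assumes "interior D \<noteq> {}" "q < inradius D"
  obtains c r where "q < r" "cball c r \<subseteq> D"
proof -
  define S where "S = {r. r \<ge> 0 \<and> (\<exists>c. cball c r \<subseteq> D)}"
  obtain c0 r0 where "0 < r0" "cball c0 r0 \<subseteq> D"
    using assms(1) by (rule ex_cball_subset_of_interior)
  then have "S \<noteq> {}" unfolding S_def by (intro ex_in_conv[THEN iffD1] exI[of _ r0]) auto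
  moreover have "q < Sup S" using assms(2) by (simp add: inradius_def S_def)
  ultimately obtain r where "r \<in> S" "q < r" by (blast elim: less_cSupE)
  then show ?thesis using that unfolding S_def by blast
qed

text \<open>A bound that is monotone in the radius of inscribed balls passes to the inradius,
  although the supremum defining it need not be attained.\<close>
lemma ln_inradius_bound:
  fixes D :: "'b::euclidean_space set"
  assumes D: "bounded D" "interior D \<noteq> {}" and b: "0 \<le> b"
    and bound: "\<And>c r. 0 < r \<Longrightarrow> cball c r \<subseteq> D \<Longrightarrow> a + b * ln r \<le> E"
  shows "a + b * ln (inradius D) \<le> E"
proof (rule tendsto_upperbound)
  have R: "0 < inradius D" using D by (rule inradius_pos)
  show "((\<lambda>q. a + b * ln q) \<longlongrightarrow> a + b * ln (inradius D)) (at_left (inradius D))"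
    using R by (intro tendsto_intros tendsto_within_subset[OF tendsto_ident_at]) auto
  show "\<forall>\<^sub>F q in at_left (inradius D). a + b * ln q \<le> E"
  proof (rule eventually_at_leftI)
    fix q assume q: "q \<in> {0<..<inradius D}"
    then have "q < inradius D" by simp
    then obtain c r where "q < r" "cball c r \<subseteq> D"
      by (rule ex_cball_subset_radius_gt[OF D(2)])
    moreover have "b * ln q \<le> b * ln r"
      using q \<open>q < r\<close> b by (intro mult_left_mono) auto
    moreover have "0 < r" using q \<open>q < r\<close> by simp
    ultimately show "a + b * ln q \<le> E"
      using bound[of r c] by linarith
  qed (use R in simp)
qed simp

lemma ln_vol_ratio:
  fixes D :: "'b::euclidean_space set"
  assumes "0 < inradius D" "0 < measure lborel D"
  shows "ln (vol_ratio D) =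
    ln (unit_ball_vol DIM('b)) + DIM('b) * ln (inradius D) - ln (measure lborel D)"
proof -
  have u: "unit_ball_vol (real DIM('b)) \<noteq> 0"
    using unit_ball_vol_pos[of "real DIM('b)"] by linarith
  have "vol_ratio D = unit_ball_vol DIM('b) * inradius D ^ DIM('b) / measure lborel D"
    using content_cball[OF less_imp_le[OF assms(1)], of "0::'b"] by (simp add: vol_ratio_def)
  also have "ln \<dots> = ln (unit_ball_vol DIM('b)) + ln (inradius D ^ DIM('b)) - ln (measure lborel D)"
    using u assms by (simp add: ln_div ln_mult)
  finally show ?thesis
    using assms(1) by (simp add: ln_realpow)
qed

lemma gibbs_mean_ge:
  fixes f :: "'b::euclidean_space \<Rightarrow> real" and k :: real
  assumes D: "compact D" "convex D" "interior D \<noteq> {}" and f: "L-lipschitz_on D f"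
    and k: "0 < k" "k \<le> 1" and s: "s \<in> D"
  shows "f s - k * constC L D + DIM('b) * k * ln k
    \<le> (LINT y:D|lborel. exp (f y / k) / gibbs_partition f D k * f y)"
proof -
  define d where "d = real DIM('b)"
  define u where "u = unit_ball_vol d"
  define Z where "Z = gibbs_partition f D k"
  define E where "E = (LINT y:D|lborel. exp (f y / k) / Z * f y)"
  define a where "a = f s - k * L * diameter D + d * k * ln k + k * ln u - k * ln (measure lborel D)"
  have V: "0 < measure lborel D"
    using D(1,3) by (rule measure_pos_of_interior)
  have R: "0 < inradius D"
    using compact_imp_bounded[OF D(1)] D(3) by (rule inradius_pos)
  have cont: "continuous_on D f" using f by (rule lipschitz_on_continuous_on)
  have Z: "0 < Z" unfolding Z_def using D(1) V cont k(1) by (rule gibbs_partition_pos)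
  have u: "0 < u" by (simp add: u_def d_def)
  have "a + d * k * ln r \<le> E" if r: "0 < r" and ball: "cball c r \<subseteq> D" for c r
  proof -
    have "u * (k * r) ^ DIM('b) * exp (f s / k - L * diameter D) \<le> Z"
      using gibbs_partition_ge_cball[OF D(1,2) ball k s f] k r
      by (simp add: Z_def u_def d_def content_cball)
    then have "ln (u * (k * r) ^ DIM('b) * exp (f s / k - L * diameter D)) \<le> ln Z"
      using u k r Z by (subst ln_le_cancel_iff) auto
    then have "ln u + d * ln k + d * ln r + (f s / k - L * diameter D) \<le> ln Z"
      using u k r by (simp add: ln_mult ln_realpow d_def distrib_left)
    then have "k * (ln u + d * ln k + d * ln r + (f s / k - L * diameter D) - ln (measure lborel D))
        \<le> k * (ln Z - ln (measure lborel D))"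
      using k by (intro mult_left_mono) auto
    also have "\<dots> \<le> E"
      unfolding E_def Z_def using D(1) V cont k(1) by (rule gibbs_mean_ge_ln_partition)
    also have "k * (ln u + d * ln k + d * ln r + (f s / k - L * diameter D) - ln (measure lborel D))
        = a + d * k * ln r"
      using k by (simp add: a_def algebra_simps)
    finally show ?thesis .
  qed
  then have "a + d * k * ln (inradius D) \<le> E"
    using compact_imp_bounded[OF D(1)] D(3) k by (intro ln_inradius_bound) (auto simp: d_def)
  moreover have "0 \<le> k * L * inradius D" \<comment> \<open>the summand \<open>L R\<^sub>\<Delta>\<close> of \<open>C\<close> is pure slack\<close>
    using k R lipschitz_on_nonneg[OF f] by simp
  moreover have "k * constC L D = k * L * inradius D + k * L * diameter D
      - k * ln u - d * k * ln (inradius D) + k * ln (measure lborel D)"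
    unfolding constC_def ln_vol_ratio[OF R V] by (simp add: u_def d_def algebra_simps)
  ultimately have "f s - k * constC L D + d * k * ln k \<le> E"
    unfolding a_def by linarith
  then show ?thesis by (simp add: E_def Z_def d_def)
qed

lemma space_phi_measure [simp]: "space (phi_measure g D k x) = D"
  by (simp add: phi_measure_def space_restrict_space)

lemma sets_phi_measure:
  "sets (phi_measure g D k x) = sets (restrict_space borel D)"
  by (simp add: phi_measure_def sets_restrict_space_cong[OF sets_lborel])

lemma measurable_phi_measure_of_continuous_on:
  fixes h :: "'b::euclidean_space \<Rightarrow> real"
  assumes "continuous_on D h"
  shows "h \<in> borel_measurable (phi_measure g D k x)"
  unfolding measurable_cong_sets[OF sets_phi_measure refl]
  using assms by (rule borel_measurable_continuous_on_restrict)

lemma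
  fixes g :: "'a \<Rightarrow> 'b::euclidean_space \<Rightarrow> real"
  assumes D: "compact D" "0 < measure lborel D" and g: "continuous_on D (g x)" and k: "0 < k"
  shows prob_space_phi_measure: "prob_space (phi_measure g D k x)"
    and integral_phi_measure: "continuous_on D h \<Longrightarrow>
      integral\<^sup>L (phi_measure g D k x) h = (LINT y:D|lborel. phi g D k x y * h y)"
proof -
  have Z: "0 < gibbs_partition (g x) D k" using D g k by (rule gibbs_partition_pos)
  have phi_cont: "continuous_on D (phi g D k x)"
    unfolding phi_eq_gibbs_partition[abs_def] using g k Z by (intro continuous_intros) auto
  have phi_nonneg: "0 \<le> phi g D k x y" for y
    using Z by (simp add: phi_eq_gibbs_partition)
  have phi_meas: "phi g D k x \<in> borel_measurable (restrict_space lborel D)"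
    using borel_measurable_continuous_on_restrict[OF phi_cont]
    by (simp add: measurable_cong_sets[OF sets_restrict_space_cong[OF sets_lborel] refl])
  have D_sets: "D \<in> sets lborel" using D(1) by (simp add: compact_imp_closed)
  have "emeasure (phi_measure g D k x) D = (\<integral>\<^sup>+ y. ennreal (phi g D k x y) * indicator D y \<partial>lborel)"
    unfolding phi_measure_def using phi_meas D_sets
    by (subst emeasure_density) (auto simp: nn_integral_restrict_space space_restrict_space
        intro!: nn_integral_cong split: split_indicator
        intro: sets.top[of "restrict_space lborel D", simplified space_restrict_space, simplified])
  also have "\<dots> = ennreal (LINT y:D|lborel. phi g D k x y)"
    using set_integrable_compact[OF D(1) phi_cont] phi_nonneg unfolding set_lebesgue_integral_def
    by (subst nn_integral_eq_integral[symmetric])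
      (auto simp: set_integrable_def intro!: nn_integral_cong simp: indicator_def mult.commute)
  also have "(LINT y:D|lborel. phi g D k x y) = 1"
    using Z by (simp add: phi_eq_gibbs_partition set_integral_divide_zero gibbs_partition_def)
  finally show "prob_space (phi_measure g D k x)"
    by (intro prob_spaceI) simp
  assume h: "continuous_on D h"
  have "integral\<^sup>L (phi_measure g D k x) h = (LINT y|restrict_space lborel D. phi g D k x y * h y)"
    unfolding phi_measure_def using phi_meas phi_nonneg
      borel_measurable_continuous_on_restrict[OF h]
    by (subst integral_density)
      (auto simp: measurable_cong_sets[OF sets_restrict_space_cong[OF sets_lborel] refl])
  also have "\<dots> = (LINT y:D|lborel. phi g D k x y * h y)"
    using D_sets by (simp add: integral_restrict_space set_lebesgue_integral_def)
  finally show "integral\<^sup>L (phi_measure g D k x) h = (LINT y:D|lborel. phi g D k x y * h y)" .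
qed

lemma integral_le_integral_Max_PiM:
  fixes h :: "'b \<Rightarrow> real"
  assumes P: "prob_space P" and I: "finite I" "i \<in> I"
    and h: "h \<in> borel_measurable P" and B: "\<And>y. y \<in> space P \<Longrightarrow> \<bar>h y\<bar> \<le> B"
  shows "integral\<^sup>L P h \<le> (\<integral>\<omega>. Max ((\<lambda>j. h (\<omega> j)) ` I) \<partial>PiM I (\<lambda>_. P))"
proof -
  let ?\<Omega> = "PiM I (\<lambda>_. P)"
  interpret \<Omega>: prob_space ?\<Omega> using P by (intro prob_space_PiM)
  have component: "(\<lambda>\<omega>. h (\<omega> j)) \<in> borel_measurable ?\<Omega>" if "j \<in> I" for j
    using measurable_compose[OF measurable_component_singleton[OF that] h] .
  have in_space: "\<omega> j \<in> space P" if "\<omega> \<in> space ?\<Omega>" "j \<in> I" for \<omega> j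
    using that by (auto simp: space_PiM)
  have Max_in: "Max ((\<lambda>j. h (\<omega> j)) ` I) \<in> (\<lambda>j. h (\<omega> j)) ` I" for \<omega>
    using I by (intro Max_in) auto
  have "integral\<^sup>L P h = integral\<^sup>L (distr ?\<Omega> P (\<lambda>\<omega>. \<omega> i)) h"
    using P I(2) by (subst distr_PiM_component) auto
  also have "\<dots> = (\<integral>\<omega>. h (\<omega> i) \<partial>?\<Omega>)"
    using I(2) h by (intro integral_distr measurable_component_singleton)
  also have "\<dots> \<le> (\<integral>\<omega>. Max ((\<lambda>j. h (\<omega> j)) ` I) \<partial>?\<Omega>)"
  proof (rule integral_mono)
    show "integrable ?\<Omega> (\<lambda>\<omega>. h (\<omega> i))"
      using I(2) in_space B by (intro \<Omega>.integrable_const_bound[where B=B] component) auto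
    show "integrable ?\<Omega> (\<lambda>\<omega>. Max ((\<lambda>j. h (\<omega> j)) ` I))"
    proof (rule \<Omega>.integrable_const_bound[where B=B])
      show "AE \<omega> in ?\<Omega>. norm (Max ((\<lambda>j. h (\<omega> j)) ` I)) \<le> B"
      proof (rule AE_I2)
        fix \<omega> assume \<omega>: "\<omega> \<in> space ?\<Omega>"
        obtain j where "j \<in> I" "Max ((\<lambda>j. h (\<omega> j)) ` I) = h (\<omega> j)"
          using Max_in[of \<omega>] by auto
        then show "norm (Max ((\<lambda>j. h (\<omega> j)) ` I)) \<le> B"
          using B in_space[OF \<omega>] by simp
      qed
    qed (use I(1) component in \<open>intro borel_measurable_Max, auto\<close>)
    show "h (\<omega> i) \<le> Max ((\<lambda>j. h (\<omega> j)) ` I)" for \<omega>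
      using I by (intro Max_ge) auto
  qed
  finally show ?thesis .
qed

lemma neg_mult_ln_le_sqrt:
  fixes k :: real
  assumes "0 < k"
  shows "- (k * ln k) \<le> sqrt k"
proof -
  define t where "t = sqrt k"
  have t: "0 < t" using assms by (simp add: t_def)
  have k: "k = t * t" using assms by (simp add: t_def)
  have "ln (1 / (2 * t)) \<le> 1 / (2 * t) - 1"
    using t by (intro ln_le_minus_one) auto
  moreover have "ln (1 / (2 * t)) = - ln 2 - ln t"
    using t by (simp add: ln_div ln_mult)
  ultimately have "- ln t \<le> 1 / (2 * t)"
    using ln_2_less_1 by linarith
  have "- (k * ln k) = 2 * (t * t) * (- ln t)"
    using t by (simp add: k ln_mult)
  also have "\<dots> \<le> 2 * (t * t) * (1 / (2 * t))"
    using \<open>- ln t \<le> 1 / (2 * t)\<close> by (intro mult_left_mono) auto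
  also have "\<dots> = t"
    using t by simp
  finally show ?thesis by (simp add: t_def)
qed

lemma kappa_pos: "0 < eps \<Longrightarrow> 0 < kappa L D eps"
  by (simp add: kappa_def Let_def)

lemma kappa_le_one: "kappa L D eps \<le> 1"
  by (simp add: kappa_def Let_def min_le_iff_disj)

lemma kappa_mult_constC_le:
  assumes "0 < eps"
  shows "kappa L D eps * constC L D \<le> eps / 2"
proof (cases "0 < constC L D")
  case True
  then have "kappa L D eps * constC L D \<le> eps / (2 * constC L D) * constC L D"
    by (intro mult_right_mono) (simp_all add: kappa_def Let_def)
  then show ?thesis using True by simp
next
  case False
  then have "kappa L D eps * constC L D \<le> 0"
    using kappa_pos[OF assms, of L D] by (intro mult_nonneg_nonpos) auto
  then show ?thesis using assms by linarith
qed

lemma kappa_entropy_le: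
  fixes D :: "'b::euclidean_space set" and L eps k :: real
  assumes "0 < eps"
  defines "k \<equiv> kappa L D eps"
  shows "- (DIM('b) * k * ln k) \<le> eps / 2"
proof -
  define d where "d = real DIM('b)"
  have d: "0 < d" by (simp add: d_def)
  have k: "0 < k" unfolding k_def using assms(1) by (rule kappa_pos)
  have "k \<le> (eps / (2 * d))\<^sup>2"
    by (simp add: k_def kappa_def Let_def d_def min_le_iff_disj)
  then have "sqrt k \<le> sqrt ((eps / (2 * d))\<^sup>2)"
    by (rule real_sqrt_le_mono)
  also have "\<dots> = eps / (2 * d)"
    using assms(1) d by simp
  finally have "sqrt k \<le> eps / (2 * d)" .
  then have "d * (- (k * ln k)) \<le> d * (eps / (2 * d))"
    using neg_mult_ln_le_sqrt[OF k] d by (intro mult_left_mono) auto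
  then show ?thesis using d by (simp add: d_def)
qed

theorem mainTheorem12:
  fixes X :: "'a::euclidean_space set"
    and Delta :: "'b::euclidean_space set"
    and g :: "'a \<Rightarrow> 'b \<Rightarrow> real"
    and L :: real and eps :: real and x :: 'a and M :: nat
  assumes "compact X" and "convex X"
    and "compact Delta" and "convex Delta" and "interior Delta \<noteq> {}"
    and "\<And>x. x \<in> X \<Longrightarrow> L-lipschitz_on Delta (g x)"
    and "eps > 0" and "x \<in> X" and "M \<ge> 1"
  shows "(\<integral>\<delta>. Max ((\<lambda>i. g x (\<delta> i)) ` {1..M})
            \<partial>(PiM {1..M} (\<lambda>_. phi_measure g Delta (kappa L Delta eps) x)))
         \<ge> Gmax g Delta x - eps"
proof -
  note Delta = assms(3,4,5) and eps = assms(7)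
  define k where "k = kappa L Delta eps"
  have k: "0 < k" "k \<le> 1" using eps by (simp_all add: k_def kappa_pos kappa_le_one)
  have lip: "L-lipschitz_on Delta (g x)" using assms(6,8) .
  have cont: "continuous_on Delta (g x)" using lip by (rule lipschitz_on_continuous_on)
  have V: "0 < measure lborel Delta" using assms(3,5) by (rule measure_pos_of_interior)
  have "Delta \<noteq> {}" using Delta(3) interior_subset by blast
  then obtain s where s: "s \<in> Delta" "\<And>y. y \<in> Delta \<Longrightarrow> g x y \<le> g x s"
    using continuous_attains_sup[OF Delta(1) _ cont] by blast
  obtain B where B: "\<And>y. y \<in> Delta \<Longrightarrow> \<bar>g x y\<bar> \<le> B"
    using compact_imp_bounded[OF compact_continuous_image[OF cont Delta(1)]]
    by (auto simp: bounded_iff)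
  have "Gmax g Delta x = g x s"
    unfolding Gmax_def using s by (intro cSup_eq_maximum) auto
  then have "Gmax g Delta x - eps \<le> g x s - k * constC L Delta + DIM('b) * k * ln k"
    using kappa_mult_constC_le[OF eps, of L Delta] kappa_entropy_le[OF eps, of L Delta]
    unfolding k_def by linarith
  also have "\<dots> \<le> (LINT y:Delta|lborel. phi g Delta k x y * g x y)"
    using gibbs_mean_ge[OF Delta lip k s(1)] by (simp add: phi_eq_gibbs_partition)
  also have "\<dots> = integral\<^sup>L (phi_measure g Delta k x) (g x)"
    using integral_phi_measure[of Delta g x k "g x"] Delta(1) V cont k(1) by simp
  also have "\<dots> \<le> (\<integral>\<delta>. Max ((\<lambda>i. g x (\<delta> i)) ` {1..M}) \<partial>PiM {1..M} (\<lambda>_. phi_measure g Delta k x))"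
    using assms(9) B prob_space_phi_measure[of Delta g x k] Delta(1) V cont k(1)
    by (intro integral_le_integral_Max_PiM measurable_phi_measure_of_continuous_on cont) auto
  finally show ?thesis by (simp add: k_def)
qed

end
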